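(* Let $0<\varepsilon<1/7$ be a constant, $p\in(0,1)$, and $G\sim G(n,p)$. Let $H$ be a balanced graph on $m$ vertices ($m$ dividing $n$) with average degree $\alpha$, $2<\alpha<3$. If $m\le\min\!\left(\sqrt{\varepsilon/p},\,2^{-1/4}p^{\alpha/4}\sqrt{\varepsilon n}\right)$ (equivalently $\varepsilon\ge m^2p$ and $\varepsilon^2\ge 2\frac{m^4}{n^2p^{\alpha}}$), then for every $\beta\in[0,1)$, \[\Pr\big[X_H(G)\le\beta\,\mathbb E[X_H(G)]\big]\le\frac{4\varepsilon}{(1-\beta)^2}.\]
   Context: A graph with average degree $\alpha$ is balanced if every induced subgraph has average degree at most $\alpha$. $G(n,p)$ is the Erdős–Rényi random graph on $[n]$. With $H$ on vertex set $[m]$, partition $[n]$ into parts $P_i=\{(i-1)\frac nm+1,\dots,i\frac nm\}$, $1\le i\le m$. $X_H(G)$ is the number of sets $S=\{v_1,\dots,v_m\}$ with $v_i\in P_i$ for all $i$ such that $i\mapsto v_i$ is an isomorphism from $H$ onto the induced subgraph $G[S]$. *)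

theory Defs
  imports "HOL-Probability.Probability"
begin

text \<open>Graphs on a vertex set are given by their edge sets: sets of 2-element subsets.
  A graph on the vertex set V is thus a subset of \<open>pairs V\<close>.\<close>

definition pairs :: "nat set \<Rightarrow> nat set set" where
  "pairs V = {e. \<exists>u v. e = {u, v} \<and> u \<noteq> v \<and> u \<in> V \<and> v \<in> V}"

text \<open>Erdos-Renyi random graph G(n,p) on [n] = {1..n}: each potential edge present
  independently with probability p. A sample is the edge indicator function.\<close>

definition Gnp :: "nat \<Rightarrow> real \<Rightarrow> (nat set \<Rightarrow> bool) pmf" where
  "Gnp n p = Pi_pmf (pairs {1..n}) False (\<lambda>_. bernoulli_pmf p)"

definition avg_degree :: "nat set set \<Rightarrow> nat set \<Rightarrow> real" where
  "avg_degree E V = 2 * real (card E) / real (card V)"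

definition balanced :: "nat set set \<Rightarrow> nat set \<Rightarrow> bool" where
  "balanced E V \<longleftrightarrow>
     (\<forall>S. S \<subseteq> V \<and> S \<noteq> {} \<longrightarrow> avg_degree {e \<in> E. e \<subseteq> S} S \<le> avg_degree E V)"

definition part :: "nat \<Rightarrow> nat \<Rightarrow> nat \<Rightarrow> nat set" where
  "part n m i = {(i - 1) * (n div m) + 1 .. i * (n div m)}"

definition XH :: "nat \<Rightarrow> nat \<Rightarrow> nat set set \<Rightarrow> (nat set \<Rightarrow> bool) \<Rightarrow> nat" where
  "XH n m EH G = card {S. \<exists>v. (\<forall>i\<in>{1..m}. v i \<in> part n m i) \<and> S = v ` {1..m} \<and>
      inj_on v {1..m} \<and>
      (\<forall>i\<in>{1..m}. \<forall>j\<in>{1..m}. i \<noteq> j \<longrightarrow> ({i, j} \<in> EH \<longleftrightarrow> G {v i, v j}))}"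

end

(* Second moment method.  X_H counts the transversals v (v i in P_i) whose pairs {v i, v j} carry
   the pattern of H, so E X_H = N^m q with N = n/m and q the probability of one such event.  Events
   of two transversals are independent unless v and w share a pair, i.e. agree on a set I with
   |I| >= 2; then Pr[A_v and A_w] = q^2 / Pr[pattern on the shared pairs], and as H is balanced and
   (1 - p)^(m^2) >= 1 - m^2 p >= 6/7 the shared pairs carry their pattern with probability at least
   (6/7) p^(alpha |I| / 2).  Summing over the agreement sets J gives
   Var X_H <= (7/6) q^2 N^(2m) sum_J (p^(-alpha/2) / N)^|J| <= (7/3) (E X_H)^2 x^2 with
   x = m^2 p^(-alpha/2) / n, and Chebyshev's inequality concludes since 2 x^2 <= eps^2. *)

theory Submission
  imports Defs
begin

lemma pairs_subset_Pow: "pairs V \<subseteq> Pow V"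
  unfolding pairs_def by auto

lemma Int_pairs_eq:
  assumes "E \<subseteq> pairs V"
  shows "E \<inter> pairs J = {e \<in> E. e \<subseteq> J}"
proof -
  have "e \<in> pairs J \<longleftrightarrow> e \<subseteq> J" if e: "e \<in> pairs V" for e
  proof
    assume "e \<subseteq> J"
    obtain u v where "e = {u, v}" "u \<noteq> v"
      using e unfolding pairs_def by blast
    with \<open>e \<subseteq> J\<close> show "e \<in> pairs J"
      unfolding pairs_def by blast
  qed (use pairs_subset_Pow in blast)
  then show ?thesis
    using assms by blast
qed

lemma finite_pairs: "finite V \<Longrightarrow> finite (pairs V)"
  using pairs_subset_Pow finite_subset by blast

lemma pairs_mono: "U \<subseteq> V \<Longrightarrow> pairs U \<subseteq> pairs V"
  unfolding pairs_def by blast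

lemma card_pairs_le: "finite V \<Longrightarrow> card (pairs V) \<le> card V ^ 2"
proof -
  assume "finite V"
  have "pairs V \<subseteq> (\<lambda>(u, v). {u, v}) ` (V \<times> V)"
    unfolding pairs_def by auto
  then have "card (pairs V) \<le> card (V \<times> V)"
    using \<open>finite V\<close> by (meson card_image_le card_mono finite_SigmaI finite_imageI order_trans)
  then show ?thesis
    by (simp add: card_cartesian_product power2_eq_square)
qed

lemma card_edges_within_le:
  assumes "balanced E V" "finite V" "J \<subseteq> V" "J \<noteq> {}"
  shows "2 * real (card {e \<in> E. e \<subseteq> J}) \<le> avg_degree E V * real (card J)"
proof -
  have "0 < real (card J)"
    using assms finite_subset by (simp add: card_gt_0_iff)
  moreover have "avg_degree {e \<in> E. e \<subseteq> J} J \<le> avg_degree E V"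
    using assms unfolding balanced_def by blast
  ultimately show ?thesis
    unfolding avg_degree_def by (simp add: field_simps)
qed

lemma prob_Pi_pmf_cylinder:
  assumes "finite I" "D \<subseteq> I"
  shows "measure_pmf.prob (Pi_pmf I dflt P) {f. \<forall>i\<in>D. f i = t i} = (\<Prod>i\<in>D. pmf (P i) (t i))"
proof -
  let ?B = "\<lambda>i. if i \<in> D then {t i} else UNIV"
  have "{f. \<forall>i\<in>D. f i = t i} = Pi I ?B"
    using assms(2) by (auto simp: Pi_def)
  then have "measure_pmf.prob (Pi_pmf I dflt P) {f. \<forall>i\<in>D. f i = t i}
      = (\<Prod>i\<in>I. measure_pmf.prob (P i) (?B i))"
    using measure_Pi_pmf_Pi[OF assms(1)] by simp
  also have "\<dots> = (\<Prod>i\<in>I. if i \<in> D then pmf (P i) (t i) else 1)"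
    by (intro prod.cong) (auto simp: measure_pmf_single)
  also have "\<dots> = (\<Prod>i\<in>D. pmf (P i) (t i))"
    using assms by (simp add: prod.If_cases Int_absorb1)
  finally show ?thesis .
qed

lemma prob_Gnp_cylinder:
  "D \<subseteq> pairs {1..n} \<Longrightarrow>
    measure_pmf.prob (Gnp n p) {G. \<forall>e\<in>D. G e = t e} = (\<Prod>e\<in>D. pmf (bernoulli_pmf p) (t e))"
  unfolding Gnp_def by (rule prob_Pi_pmf_cylinder) (simp_all add: finite_pairs)

lemma finite_set_pmf_Gnp: "finite (set_pmf (Gnp n p))"
  unfolding Gnp_def by (subst set_Pi_pmf) (auto intro!: finite_PiE_dflt finite_pairs)

lemma integrable_Gnp [simp]: "integrable (measure_pmf (Gnp n p)) (f :: _ \<Rightarrow> real)"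
  by (rule integrable_measure_pmf_finite[OF finite_set_pmf_Gnp])

lemma sum_power_from_2_le:
  fixes x :: real
  assumes "0 \<le> x" "x \<le> 1/2"
  shows "(\<Sum>k=2..m. x ^ k) \<le> 2 * x^2"
proof (cases "m < 2")
  case False
  have "(\<Sum>k=2..m. x ^ k) = (x^2 - x ^ Suc m) / (1 - x)"
    using False assms by (simp add: sum_gp)
  also have "\<dots> \<le> x^2 / (1 - x)"
    using assms by (intro divide_right_mono) auto
  also have "\<dots> \<le> 2 * x^2"
    using assms mult_right_mono[of "2 * x" 1 "x^2"] by (simp add: field_simps)
  finally show ?thesis .
qed (use assms in simp)

lemma sum_power_card_subsets_le:
  fixes y :: real
  assumes A: "finite A" and y: "0 \<le> y" "real (card A) * y \<le> 1/2"
  shows "(\<Sum>J | J \<subseteq> A \<and> 2 \<le> card J. y ^ card J) \<le> 2 * (real (card A) * y)^2"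
proof -
  let ?S = "{J. J \<subseteq> A \<and> 2 \<le> card J}"
  have "finite ?S"
    using A by (auto intro: finite_subset[of _ "Pow A"])
  then have "(\<Sum>J\<in>?S. y ^ card J) = (\<Sum>k=2..card A. \<Sum>J | J \<in> ?S \<and> card J = k. y ^ card J)"
    by (intro sum.group[symmetric]) (auto intro: card_mono[OF A])
  also have "\<dots> = (\<Sum>k=2..card A. real (card A choose k) * y ^ k)"
  proof (intro sum.cong refl)
    fix k assume "k \<in> {2..card A}"
    then have "{J. J \<in> ?S \<and> card J = k} = {J. J \<subseteq> A \<and> card J = k}" by auto
    then show "(\<Sum>J | J \<in> ?S \<and> card J = k. y ^ card J) = real (card A choose k) * y ^ k"
      using n_subsets[OF A, of k] by simp
  qed
  also have "\<dots> \<le> (\<Sum>k=2..card A. (real (card A) * y) ^ k)"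
  proof (intro sum_mono)
    fix k
    have "real (card A choose k) \<le> real (card A) ^ k"
      by (metis binomial_le_pow binomial_eq_0 of_nat_le_iff of_nat_power not_le zero_le)
    then show "real (card A choose k) * y ^ k \<le> (real (card A) * y) ^ k"
      unfolding power_mult_distrib using y by (intro mult_right_mono) auto
  qed
  also have "\<dots> \<le> 2 * (real (card A) * y)^2"
    using y by (intro sum_power_from_2_le) auto
  finally show ?thesis .
qed

lemma card_PiE_agreeing:
  assumes "finite I" "J \<subseteq> I" "v \<in> PiE I S"
  shows "card {w \<in> PiE I S. \<forall>i\<in>J. w i = v i} = (\<Prod>i\<in>I - J. card (S i))"
proof -
  have "{w \<in> PiE I S. \<forall>i\<in>J. w i = v i} = PiE I (\<lambda>i. if i \<in> J then {v i} else S i)"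
  proof (intro set_eqI iffI)
    fix w assume w: "w \<in> PiE I (\<lambda>i. if i \<in> J then {v i} else S i)"
    have "w i = v i" if "i \<in> J" for i
      using PiE_mem[OF w, of i] that assms(2) by auto
    moreover have "w i \<in> S i" if "i \<in> I" for i
      using PiE_mem[OF w that] PiE_mem[OF assms(3) that] by (cases "i \<in> J") auto
    ultimately show "w \<in> {w \<in> PiE I S. \<forall>i\<in>J. w i = v i}"
      using w by (auto simp: PiE_iff)
  qed (auto simp: PiE_iff)
  then have "card {w \<in> PiE I S. \<forall>i\<in>J. w i = v i} = (\<Prod>i\<in>I. if i \<in> J then 1 else card (S i))"
    using assms(1) by (simp add: card_PiE if_distrib cong: if_cong)
  also have "\<dots> = (\<Prod>i\<in>I - J. card (S i))"
    using assms(1,2) by (simp add: prod.If_cases Diff_eq Int_absorb1)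
  finally show ?thesis .
qed

lemma (in prob_space) prob_le_fraction_of_expectation:
  assumes "random_variable borel X" "integrable M (\<lambda>x. X x ^ 2)"
    and "0 < expectation X" "\<beta> < 1"
  shows "prob {x \<in> space M. X x \<le> \<beta> * expectation X} \<le> variance X / ((1 - \<beta>) * expectation X)^2"
proof -
  have "prob {x \<in> space M. X x \<le> \<beta> * expectation X}
      \<le> prob {x \<in> space M. (1 - \<beta>) * expectation X \<le> \<bar>X x - expectation X\<bar>}"
    using assms by (intro finite_measure_mono) (auto simp: algebra_simps)
  also have "\<dots> \<le> variance X / ((1 - \<beta>) * expectation X)^2"
    using assms by (intro Chebyshev_inequality) auto
  finally show ?thesis .
qed

lemma squared_overlap_ratio_le:
  fixes x p a e N :: real
  assumes "0 \<le> x" "0 < p" "0 < N" "0 \<le> e"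
    "x \<le> 2 powr (-1/4) * p powr (a / 4) * sqrt (e * N)"
  shows "2 * (x ^ 2 * p powr (- a / 2) / N) ^ 2 \<le> e ^ 2"
proof -
  have "x ^ 4 \<le> (2 powr (-1/4) * p powr (a / 4) * sqrt (e * N)) ^ 4"
    using assms by (intro power_mono) auto
  also have "\<dots> = p powr a * (e * N) ^ 2 / 2"
  proof -
    have "(2 powr (-1/4) :: real) ^ 4 = 2 powr (real 4 * (-1/4))"
      by (rule powr_power) simp
    then have "(2 powr (-1/4) :: real) ^ 4 = 1/2"
      by (simp add: powr_minus)
    moreover have "(p powr (a / 4)) ^ 4 = p powr a"
      using assms by (simp add: powr_power)
    moreover have "sqrt (e * N) ^ 4 = (sqrt (e * N) ^ 2) ^ 2"
      by (simp flip: power_mult)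
    ultimately show ?thesis
      using assms by (simp add: power_mult_distrib)
  qed
  finally have x4: "x ^ 4 \<le> p powr a * (e * N) ^ 2 / 2" .
  have "(p powr (- a / 2)) ^ 2 = p powr (real 2 * (- a / 2))"
    using assms by (intro powr_power) simp
  then have "(p powr (- a / 2)) ^ 2 = inverse (p powr a)"
    by (simp add: powr_minus)
  then have "2 * (x ^ 2 * p powr (- a / 2) / N) ^ 2 = 2 * x ^ 4 / (p powr a * N ^ 2)"
    by (simp add: power_mult_distrib power_divide field_simps flip: power_mult)
  also have "\<dots> \<le> 2 * (p powr a * (e * N) ^ 2 / 2) / (p powr a * N ^ 2)"
    using x4 assms by (intro divide_right_mono mult_left_mono) auto
  also have "\<dots> = e ^ 2"
    using assms by (simp add: power_mult_distrib)
  finally show ?thesis .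
qed

locale partite_copies =
  fixes n m :: nat and EH :: "nat set set" and p :: real
  assumes m_pos: "0 < m" and m_dvd_n: "m dvd n" and n_pos: "0 < n"
    and p_pos: "0 < p" and p_less_1: "p < 1" and EH_pairs: "EH \<subseteq> pairs {1..m}"
begin

definition part_size :: nat where
  "part_size = n div m"

definition part_index :: "nat \<Rightarrow> nat" where
  "part_index x = (x - 1) div part_size + 1"

definition transversals :: "(nat \<Rightarrow> nat) set" where
  "transversals = PiE {1..m} (part n m)"

definition copy_pairs :: "(nat \<Rightarrow> nat) \<Rightarrow> nat set set" where
  "copy_pairs v = image v ` pairs {1..m}"

(* Whether a pair of vertices of G must be an edge in a copy of H through it.  Since part_index
   recovers i from v i, all transversals through a shared pair impose the same requirement. *)
definition pattern_edge :: "nat set \<Rightarrow> bool" where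
  "pattern_edge e \<longleftrightarrow> part_index ` e \<in> EH"

definition copy_event :: "(nat \<Rightarrow> nat) \<Rightarrow> (nat set \<Rightarrow> bool) set" where
  "copy_event v = {G. \<forall>e\<in>copy_pairs v. G e = pattern_edge e}"

definition pattern_prob :: "nat set set \<Rightarrow> real" where
  "pattern_prob D = (\<Prod>e\<in>D. pmf (bernoulli_pmf p) (pattern_edge e))"

definition copy_prob :: real where
  "copy_prob = (\<Prod>e\<in>pairs {1..m}. pmf (bernoulli_pmf p) (e \<in> EH))"

definition agree :: "(nat \<Rightarrow> nat) \<Rightarrow> (nat \<Rightarrow> nat) \<Rightarrow> nat set" where
  "agree v w = {i \<in> {1..m}. v i = w i}"

definition copy_count :: "(nat set \<Rightarrow> bool) \<Rightarrow> real" where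
  "copy_count G = real (card {v \<in> transversals. G \<in> copy_event v})"

lemma pmf_bernoulli_if: "pmf (bernoulli_pmf p) b = (if b then p else 1 - p)"
  using p_pos p_less_1 by (cases b) simp_all

lemma part_size_pos: "0 < part_size"
  using m_pos m_dvd_n n_pos unfolding part_size_def
  by (metis div_greater_zero_iff dvd_imp_le)

lemma n_eq_part_size_mult: "n = part_size * m"
  using m_dvd_n unfolding part_size_def by simp

lemma card_part: "1 \<le> i \<Longrightarrow> card (part n m i) = part_size"
  unfolding part_def part_size_def by (cases i) auto

lemma part_subset: "i \<in> {1..m} \<Longrightarrow> part n m i \<subseteq> {1..n}"
  using n_eq_part_size_mult mult_le_mono1[of i m part_size]
  unfolding part_def part_size_def[symmetric] by (auto simp: mult.commute)

lemma part_index_part: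
  assumes "i \<in> {1..m}" "x \<in> part n m i"
  shows "part_index x = i"
proof -
  obtain k where i: "i = Suc k"
    using assms(1) by (cases i) auto
  have "k * part_size < x" "x \<le> k * part_size + part_size"
    using assms(2) unfolding i part_def part_size_def[symmetric] by auto
  then have "(x - 1) div part_size = k"
    by (intro div_nat_eqI) (auto simp: algebra_simps)
  then show ?thesis
    unfolding part_index_def i by simp
qed

lemma finite_transversals: "finite transversals"
  unfolding transversals_def part_def by (intro finite_PiE) auto

lemma card_transversals: "card transversals = part_size ^ m"
  unfolding transversals_def by (simp add: card_PiE card_part)

lemma part_index_transversal: "v \<in> transversals \<Longrightarrow> i \<in> {1..m} \<Longrightarrow> part_index (v i) = i"
  using part_index_part unfolding transversals_def by blast

lemma inj_on_transversal: "v \<in> transversals \<Longrightarrow> inj_on v {1..m}"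
  by (metis part_index_transversal inj_onI)

lemma copy_pairs_subset:
  assumes "v \<in> transversals"
  shows "copy_pairs v \<subseteq> pairs {1..n}"
proof
  fix e assume "e \<in> copy_pairs v"
  then obtain i j where ij: "i \<in> {1..m}" "j \<in> {1..m}" "i \<noteq> j" and e: "e = {v i, v j}"
    unfolding copy_pairs_def pairs_def by auto
  have "v i \<in> {1..n}" "v j \<in> {1..n}"
    using ij PiE_mem[OF assms[unfolded transversals_def]] part_subset by blast+
  moreover have "v i \<noteq> v j"
    using ij inj_on_transversal[OF assms] by (meson inj_onD)
  ultimately show "e \<in> pairs {1..n}"
    unfolding pairs_def e by blast
qed

lemma finite_copy_pairs: "v \<in> transversals \<Longrightarrow> finite (copy_pairs v)"
  using copy_pairs_subset finite_pairs finite_subset by (metis finite_atLeastAtMost)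

lemma inj_on_pair_image: "v \<in> transversals \<Longrightarrow> inj_on (image v) (pairs {1..m})"
  using inj_on_image_Pow[OF inj_on_transversal] pairs_subset_Pow inj_on_subset by metis

lemma pattern_edge_image:
  assumes "v \<in> transversals" "e \<in> pairs {1..m}"
  shows "pattern_edge (v ` e) \<longleftrightarrow> e \<in> EH"
proof -
  have "part_index ` v ` e = e"
    using assms part_index_transversal pairs_subset_Pow by (force simp: image_image)
  then show ?thesis
    unfolding pattern_edge_def by simp
qed

lemma prob_pattern_event:
  "D \<subseteq> pairs {1..n} \<Longrightarrow> measure_pmf.prob (Gnp n p) {G. \<forall>e\<in>D. G e = pattern_edge e} = pattern_prob D"
  unfolding pattern_prob_def by (rule prob_Gnp_cylinder)

lemma pattern_prob_copy_pairs:
  assumes "v \<in> transversals"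
  shows "pattern_prob (copy_pairs v) = copy_prob"
proof -
  have "pattern_prob (copy_pairs v) = (\<Prod>e\<in>pairs {1..m}. pmf (bernoulli_pmf p) (pattern_edge (v ` e)))"
    unfolding pattern_prob_def copy_pairs_def
    using prod.reindex[OF inj_on_pair_image[OF assms]] by simp
  also have "\<dots> = copy_prob"
    unfolding copy_prob_def using assms by (intro prod.cong) (simp_all add: pattern_edge_image)
  finally show ?thesis .
qed

lemma prob_copy_event: "v \<in> transversals \<Longrightarrow> measure_pmf.prob (Gnp n p) (copy_event v) = copy_prob"
  unfolding copy_event_def
  using prob_pattern_event[OF copy_pairs_subset] pattern_prob_copy_pairs by simp

lemma prob_copy_event_Int:
  assumes "v \<in> transversals" "w \<in> transversals"
  shows "measure_pmf.prob (Gnp n p) (copy_event v \<inter> copy_event w)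
           * pattern_prob (copy_pairs v \<inter> copy_pairs w) = copy_prob ^ 2"
proof -
  have "copy_event v \<inter> copy_event w = {G. \<forall>e\<in>copy_pairs v \<union> copy_pairs w. G e = pattern_edge e}"
    unfolding copy_event_def by auto
  then have "measure_pmf.prob (Gnp n p) (copy_event v \<inter> copy_event w)
      = pattern_prob (copy_pairs v \<union> copy_pairs w)"
    using assms copy_pairs_subset by (simp add: prob_pattern_event)
  moreover have "pattern_prob (copy_pairs v \<union> copy_pairs w) * pattern_prob (copy_pairs v \<inter> copy_pairs w)
      = pattern_prob (copy_pairs v) * pattern_prob (copy_pairs w)"
    unfolding pattern_prob_def using assms by (intro prod.union_inter finite_copy_pairs)
  ultimately show ?thesis
    using assms by (simp add: pattern_prob_copy_pairs power2_eq_square)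
qed

lemma copy_event_iff:
  assumes "v \<in> transversals"
  shows "G \<in> copy_event v \<longleftrightarrow>
           (\<forall>i\<in>{1..m}. \<forall>j\<in>{1..m}. i \<noteq> j \<longrightarrow> ({i, j} \<in> EH \<longleftrightarrow> G {v i, v j}))"
proof -
  have "G \<in> copy_event v \<longleftrightarrow> (\<forall>e\<in>pairs {1..m}. G (v ` e) = (e \<in> EH))"
    using assms unfolding copy_event_def copy_pairs_def by (simp add: pattern_edge_image)
  moreover have "(\<forall>e\<in>pairs {1..m}. P e) \<longleftrightarrow> (\<forall>i\<in>{1..m}. \<forall>j\<in>{1..m}. i \<noteq> j \<longrightarrow> P {i, j})" for P
    unfolding pairs_def by blast
  ultimately show ?thesis
    by auto
qed

lemma inj_on_range_transversals: "inj_on (\<lambda>v. v ` {1..m}) transversals"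
proof (rule inj_onI)
  fix v w assume v: "v \<in> transversals" and w: "w \<in> transversals" and eq: "v ` {1..m} = w ` {1..m}"
  show "v = w"
  proof (rule extensionalityI[of _ "{1..m}"])
    fix i assume i: "i \<in> {1..m}"
    then obtain j where "j \<in> {1..m}" "v i = w j"
      using eq by (metis imageE imageI)
    then show "v i = w i"
      using part_index_transversal v w i by metis
  qed (use v w in \<open>auto simp: transversals_def PiE_def\<close>)
qed

lemma XH_eq_copy_count: "real (XH n m EH G) = copy_count G"
proof -
  let ?C = "\<lambda>v. \<forall>i\<in>{1..m}. \<forall>j\<in>{1..m}. i \<noteq> j \<longrightarrow> ({i, j} \<in> EH \<longleftrightarrow> G {v i, v j})"
  have "{S. \<exists>v. (\<forall>i\<in>{1..m}. v i \<in> part n m i) \<and> S = v ` {1..m} \<and> inj_on v {1..m} \<and> ?C v}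
      = (\<lambda>v. v ` {1..m}) ` {v \<in> transversals. G \<in> copy_event v}" (is "?L = ?R")
  proof (intro equalityI subsetI)
    fix S assume "S \<in> ?L"
    then obtain v where v: "\<forall>i\<in>{1..m}. v i \<in> part n m i" "S = v ` {1..m}" "?C v"
      by blast
    let ?w = "restrict v {1..m}"
    have w: "?w \<in> transversals"
      using v(1) unfolding transversals_def by simp
    moreover have "G \<in> copy_event ?w"
      using copy_event_iff[OF w] v(3) by simp
    moreover have "S = ?w ` {1..m}"
      using v(2) by simp
    ultimately show "S \<in> ?R"
      by blast
  next
    fix S assume "S \<in> ?R"
    then obtain v where v: "v \<in> transversals" "G \<in> copy_event v" "S = v ` {1..m}"
      by blast
    have "\<forall>i\<in>{1..m}. v i \<in> part n m i"
      using v(1) unfolding transversals_def by blast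
    then show "S \<in> ?L"
      using v copy_event_iff inj_on_transversal by blast
  qed
  then show ?thesis
    unfolding XH_def copy_count_def
    using card_image[OF inj_on_subset[OF inj_on_range_transversals]] by simp
qed

lemma copy_count_eq_sum: "copy_count G = (\<Sum>v\<in>transversals. indicator (copy_event v) G)"
  unfolding copy_count_def by (simp add: indicator_def sum.If_cases finite_transversals Int_def)

lemma copy_count_squared_eq_sum:
  "copy_count G ^ 2 = (\<Sum>(v, w)\<in>transversals \<times> transversals. indicator (copy_event v \<inter> copy_event w) G)"
  unfolding copy_count_eq_sum power2_eq_square sum_product sum.cartesian_product
  by (simp add: indicator_inter_arith)

lemma expectation_copy_count:
  "measure_pmf.expectation (Gnp n p) copy_count = real (card transversals) * copy_prob"
  unfolding copy_count_eq_sum by (simp add: prob_copy_event)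

lemma variance_copy_count:
  "measure_pmf.variance (Gnp n p) copy_count
     = (\<Sum>(v, w)\<in>transversals \<times> transversals.
          measure_pmf.prob (Gnp n p) (copy_event v \<inter> copy_event w) - copy_prob ^ 2)"
proof -
  have "measure_pmf.expectation (Gnp n p) (\<lambda>G. copy_count G ^ 2)
      = (\<Sum>(v, w)\<in>transversals \<times> transversals. measure_pmf.prob (Gnp n p) (copy_event v \<inter> copy_event w))"
    unfolding copy_count_squared_eq_sum by (simp add: case_prod_beta)
  moreover have "measure_pmf.expectation (Gnp n p) copy_count ^ 2
      = (\<Sum>(v, w)\<in>transversals \<times> transversals. copy_prob ^ 2)"
    by (simp add: expectation_copy_count card_cartesian_product power_mult_distrib power2_eq_square)
  ultimately show ?thesis
    by (simp add: measure_pmf.variance_eq sum_subtractf case_prod_beta)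
qed

lemma copy_pairs_Int_subset:
  assumes v: "v \<in> transversals" and w: "w \<in> transversals"
  shows "copy_pairs v \<inter> copy_pairs w \<subseteq> image v ` pairs (agree v w)"
proof
  fix e assume "e \<in> copy_pairs v \<inter> copy_pairs w"
  then obtain i j k l where ij: "i \<in> {1..m}" "j \<in> {1..m}" "i \<noteq> j" "e = {v i, v j}"
    and kl: "k \<in> {1..m}" "l \<in> {1..m}" "e = {w k, w l}"
    unfolding copy_pairs_def pairs_def by auto
  have "v x = w y \<Longrightarrow> x \<in> {1..m} \<Longrightarrow> y \<in> {1..m} \<Longrightarrow> x = y" for x y
    using part_index_transversal v w by metis
  then have "v i = w i" "v j = w j"
    using ij kl by (metis doubleton_eq_iff)+
  then have "{i, j} \<in> pairs (agree v w)"
    using ij unfolding pairs_def agree_def by auto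
  moreover have "e = v ` {i, j}"
    using ij by simp
  ultimately show "e \<in> image v ` pairs (agree v w)"
    by (rule rev_image_eqI)
qed

lemma two_le_card_agree:
  assumes "v \<in> transversals" "w \<in> transversals" "copy_pairs v \<inter> copy_pairs w \<noteq> {}"
  shows "2 \<le> card (agree v w)"
proof -
  have "pairs (agree v w) \<noteq> {}"
    using copy_pairs_Int_subset[OF assms(1,2)] assms(3) by auto
  then obtain i j where ij: "i \<in> agree v w" "j \<in> agree v w" "i \<noteq> j"
    unfolding pairs_def by blast
  then have "card {i, j} \<le> card (agree v w)"
    by (intro card_mono) (auto simp: agree_def)
  then show ?thesis
    using ij(3) by simp
qed

lemma pattern_prob_antimono:
  assumes "D \<subseteq> D'" "finite D'"
  shows "pattern_prob D' \<le> pattern_prob D"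
proof -
  have "pattern_prob D' = (\<Prod>e\<in>D' - D. pmf (bernoulli_pmf p) (pattern_edge e)) * pattern_prob D"
    unfolding pattern_prob_def using assms by (rule prod.subset_diff)
  also have "\<dots> \<le> pattern_prob D"
    unfolding pattern_prob_def
    by (intro mult_left_le_one_le prod_le_1 prod_nonneg) (auto simp: pmf_le_1)
  finally show ?thesis .
qed

lemma pattern_prob_image_pairs:
  assumes v: "v \<in> transversals" and J: "J \<subseteq> {1..m}"
  shows "pattern_prob (image v ` pairs J) = p ^ card {e \<in> EH. e \<subseteq> J} * (1 - p) ^ card (pairs J - EH)"
proof -
  have sub: "pairs J \<subseteq> pairs {1..m}"
    using J by (rule pairs_mono)
  have fin: "finite (pairs J)"
    using J finite_pairs finite_subset by (metis finite_atLeastAtMost)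
  have "pattern_prob (image v ` pairs J) = (\<Prod>e\<in>pairs J. pmf (bernoulli_pmf p) (e \<in> EH))"
    unfolding pattern_prob_def prod.reindex[OF inj_on_subset[OF inj_on_pair_image[OF v] sub]]
    using sub by (intro prod.cong) (auto simp: pattern_edge_image[OF v])
  also have "\<dots> = (\<Prod>e\<in>pairs J. if e \<in> EH then p else 1 - p)"
    by (simp only: pmf_bernoulli_if)
  also have "\<dots> = p ^ card (EH \<inter> pairs J) * (1 - p) ^ card (pairs J - EH)"
    using fin by (simp add: prod.If_cases Diff_eq Int_commute)
  also have "EH \<inter> pairs J = {e \<in> EH. e \<subseteq> J}"
    using EH_pairs by (rule Int_pairs_eq)
  finally show ?thesis .
qed

lemma copy_prob_pos: "0 < copy_prob"
  unfolding copy_prob_def using p_pos p_less_1 by (intro prod_pos) (simp add: pmf_bernoulli_if)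

lemma pattern_prob_shared_ge:
  assumes bal: "balanced EH {1..m}" and mp: "real m ^ 2 * p \<le> 1/7"
    and v: "v \<in> transversals" and w: "w \<in> transversals"
    and shared: "copy_pairs v \<inter> copy_pairs w \<noteq> {}"
  shows "6/7 * p powr (avg_degree EH {1..m} * card (agree v w) / 2)
           \<le> pattern_prob (copy_pairs v \<inter> copy_pairs w)"
proof -
  let ?J = "agree v w"
  have "?J \<noteq> {}"
    using two_le_card_agree[OF v w shared] by auto
  then have J: "?J \<subseteq> {1..m}" "?J \<noteq> {}"
    unfolding agree_def by auto
  have "p powr (avg_degree EH {1..m} * card ?J / 2) \<le> p powr card {e \<in> EH. e \<subseteq> ?J}"
    using card_edges_within_le[OF bal _ J] p_pos p_less_1 by (intro powr_mono') auto
  then have edges: "p powr (avg_degree EH {1..m} * card ?J / 2) \<le> p ^ card {e \<in> EH. e \<subseteq> ?J}"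
    using p_pos by (simp add: powr_realpow)
  have "card (pairs ?J - EH) \<le> card (pairs {1..m})"
    using pairs_mono[OF J(1)] by (intro card_mono finite_pairs) auto
  also have "\<dots> \<le> m ^ 2"
    using card_pairs_le[of "{1..m}"] by simp
  finally have "card (pairs ?J - EH) \<le> m ^ 2" .
  have "6/7 \<le> 1 + real (m ^ 2) * (- p)"
    using mp by simp
  also have "\<dots> \<le> (1 - p) ^ (m ^ 2)"
    using Bernoulli_inequality[of "- p" "m ^ 2"] p_less_1 by simp
  also have "\<dots> \<le> (1 - p) ^ card (pairs ?J - EH)"
    using \<open>card (pairs ?J - EH) \<le> m ^ 2\<close> p_pos p_less_1 by (intro power_decreasing) auto
  finally have non_edges: "6/7 \<le> (1 - p) ^ card (pairs ?J - EH)" .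
  have "6/7 * p powr (avg_degree EH {1..m} * card ?J / 2)
      \<le> (1 - p) ^ card (pairs ?J - EH) * p ^ card {e \<in> EH. e \<subseteq> ?J}"
    using edges non_edges by (intro mult_mono) auto
  also have "\<dots> = pattern_prob (image v ` pairs ?J)"
    using pattern_prob_image_pairs[OF v J(1)] by simp
  also have "\<dots> \<le> pattern_prob (copy_pairs v \<inter> copy_pairs w)"
    using copy_pairs_Int_subset[OF v w] finite_pairs[OF finite_subset[OF J(1)]]
    by (intro pattern_prob_antimono) auto
  finally show ?thesis .
qed

(* Bounding the term for I = agree v w by the sum over all J \<subseteq> I keeps the number of pairs
   (v, w) counted for each J exact. *)
lemma covariance_le:
  assumes bal: "balanced EH {1..m}" and mp: "real m ^ 2 * p \<le> 1/7"
    and v: "v \<in> transversals" and w: "w \<in> transversals"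
  shows "measure_pmf.prob (Gnp n p) (copy_event v \<inter> copy_event w) - copy_prob ^ 2
           \<le> 7/6 * copy_prob ^ 2 *
              (\<Sum>J | J \<subseteq> agree v w \<and> 2 \<le> card J. (p powr (- avg_degree EH {1..m} / 2)) ^ card J)"
proof (cases "copy_pairs v \<inter> copy_pairs w = {}")
  case True
  then show ?thesis
    using prob_copy_event_Int[OF v w] copy_prob_pos
    by (simp add: pattern_prob_def sum_nonneg)
next
  case False
  let ?P = "measure_pmf.prob (Gnp n p) (copy_event v \<inter> copy_event w)"
  let ?L = "pattern_prob (copy_pairs v \<inter> copy_pairs w)"
  let ?r = "p powr (- avg_degree EH {1..m} / 2)"
  let ?k = "card (agree v w)"
  have L: "6/7 * p powr (avg_degree EH {1..m} * ?k / 2) \<le> ?L"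
    by (rule pattern_prob_shared_ge[OF bal mp v w False])
  have L_pos: "0 < 6/7 * p powr (avg_degree EH {1..m} * ?k / 2)"
    using p_pos by simp
  then have "0 < ?L"
    using L by linarith
  have "?P = copy_prob ^ 2 / ?L"
    using prob_copy_event_Int[OF v w] \<open>0 < ?L\<close> by (simp add: field_simps)
  also have "\<dots> \<le> copy_prob ^ 2 / (6/7 * p powr (avg_degree EH {1..m} * ?k / 2))"
    using L L_pos by (intro frac_le) auto
  also have "\<dots> = 7/6 * copy_prob ^ 2 * ?r ^ ?k"
  proof -
    have "?r ^ ?k = p powr (?k * (- avg_degree EH {1..m} / 2))"
      using p_pos by (simp add: powr_power)
    also have "\<dots> = inverse (p powr (avg_degree EH {1..m} * ?k / 2))"
      by (subst powr_minus[symmetric]) (simp add: algebra_simps)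
    finally show ?thesis
      by (simp add: field_simps)
  qed
  also have "\<dots> \<le> 7/6 * copy_prob ^ 2 * (\<Sum>J | J \<subseteq> agree v w \<and> 2 \<le> card J. ?r ^ card J)"
    using two_le_card_agree[OF v w False] copy_prob_pos
    by (intro mult_left_mono member_le_sum) (auto simp: agree_def)
  finally show ?thesis
    using zero_le_power2[of copy_prob] by linarith
qed

lemma card_transversal_pairs_agreeing:
  assumes "J \<subseteq> {1..m}"
  shows "card {(v, w) \<in> transversals \<times> transversals. J \<subseteq> agree v w}
           = part_size ^ m * part_size ^ (m - card J)"
proof -
  have "{(v, w) \<in> transversals \<times> transversals. J \<subseteq> agree v w}
      = Sigma transversals (\<lambda>v. {w \<in> transversals. \<forall>i\<in>J. w i = v i})"
    using assms unfolding agree_def by auto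
  moreover have "card {w \<in> transversals. \<forall>i\<in>J. w i = v i} = part_size ^ (m - card J)"
    if "v \<in> transversals" for v
  proof -
    have "card {w \<in> transversals. \<forall>i\<in>J. w i = v i} = (\<Prod>i\<in>{1..m} - J. card (part n m i))"
      using assms that unfolding transversals_def by (intro card_PiE_agreeing) auto
    also have "\<dots> = part_size ^ (m - card J)"
      using assms by (simp add: card_part card_Diff_subset finite_subset)
    finally show ?thesis .
  qed
  ultimately show ?thesis
    using finite_transversals by (simp add: card_SigmaI card_transversals)
qed

lemma sum_transversal_pairs_overlaps:
  fixes r :: real
  shows "(\<Sum>(v, w)\<in>transversals \<times> transversals. \<Sum>J | J \<subseteq> agree v w \<and> 2 \<le> card J. r ^ card J)
           = real (card transversals) ^ 2 *
             (\<Sum>J | J \<subseteq> {1..m} \<and> 2 \<le> card J. (r / real part_size) ^ card J)"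
proof -
  let ?JJ = "{J. J \<subseteq> {1..m} \<and> 2 \<le> card J}"
  have "(\<Sum>(v, w)\<in>transversals \<times> transversals. \<Sum>J | J \<subseteq> agree v w \<and> 2 \<le> card J. r ^ card J)
      = (\<Sum>x\<in>transversals \<times> transversals. \<Sum>J\<in>{J \<in> ?JJ. J \<subseteq> agree (fst x) (snd x)}. r ^ card J)"
    unfolding case_prod_beta by (intro sum.cong refl arg_cong[where f = "\<lambda>A. sum _ A"]) (auto simp: agree_def)
  also have "\<dots> = (\<Sum>J\<in>?JJ. \<Sum>x\<in>{x \<in> transversals \<times> transversals. J \<subseteq> agree (fst x) (snd x)}. r ^ card J)"
    using finite_transversals by (intro sum.swap_restrict) auto
  also have "\<dots> = (\<Sum>J\<in>?JJ. real (part_size ^ m * part_size ^ (m - card J)) * r ^ card J)"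
  proof (intro sum.cong refl)
    fix J assume "J \<in> ?JJ"
    moreover have "{x \<in> transversals \<times> transversals. J \<subseteq> agree (fst x) (snd x)}
        = {(v, w) \<in> transversals \<times> transversals. J \<subseteq> agree v w}"
      by auto
    ultimately show "(\<Sum>x\<in>{x \<in> transversals \<times> transversals. J \<subseteq> agree (fst x) (snd x)}. r ^ card J)
        = real (part_size ^ m * part_size ^ (m - card J)) * r ^ card J"
      using card_transversal_pairs_agreeing[of J] by simp
  qed
  also have "\<dots> = (\<Sum>J\<in>?JJ. real (card transversals) ^ 2 * (r / real part_size) ^ card J)"
  proof (intro sum.cong refl)
    fix J assume "J \<in> ?JJ"
    then have "card J \<le> m"
      using card_mono[of "{1..m}" J] by auto
    then have "real part_size ^ m = real part_size ^ card J * real part_size ^ (m - card J)"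
      by (simp flip: power_add)
    then show "real (part_size ^ m * part_size ^ (m - card J)) * r ^ card J
        = real (card transversals) ^ 2 * (r / real part_size) ^ card J"
      using part_size_pos by (simp add: card_transversals power_divide power2_eq_square)
  qed
  finally show ?thesis
    by (simp add: sum_distrib_left)
qed

lemma variance_copy_count_le:
  assumes bal: "balanced EH {1..m}" and mp: "real m ^ 2 * p \<le> 1/7"
    and small: "real m ^ 2 * p powr (- avg_degree EH {1..m} / 2) / real n \<le> 1/2"
  shows "measure_pmf.variance (Gnp n p) copy_count
           \<le> 7/3 * measure_pmf.expectation (Gnp n p) copy_count ^ 2
                 * (real m ^ 2 * p powr (- avg_degree EH {1..m} / 2) / real n) ^ 2"
proof -
  let ?r = "p powr (- avg_degree EH {1..m} / 2)"
  let ?y = "?r / real part_size"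
  have "real n = real part_size * real m"
    using n_eq_part_size_mult of_nat_mult by metis
  then have my: "real m * ?y = real m ^ 2 * ?r / real n"
    using m_pos part_size_pos by (simp add: power2_eq_square)
  have "measure_pmf.variance (Gnp n p) copy_count
      \<le> (\<Sum>(v, w)\<in>transversals \<times> transversals.
            7/6 * copy_prob ^ 2 * (\<Sum>J | J \<subseteq> agree v w \<and> 2 \<le> card J. ?r ^ card J))"
    unfolding variance_copy_count case_prod_beta
    by (intro sum_mono covariance_le[OF bal mp]) auto
  also have "\<dots> = 7/6 * copy_prob ^ 2 *
      (\<Sum>(v, w)\<in>transversals \<times> transversals. \<Sum>J | J \<subseteq> agree v w \<and> 2 \<le> card J. ?r ^ card J)"
    by (simp add: sum_distrib_left case_prod_unfold)
  also have "\<dots> = 7/6 * copy_prob ^ 2 * real (card transversals) ^ 2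
                    * (\<Sum>J | J \<subseteq> {1..m} \<and> 2 \<le> card J. ?y ^ card J)"
    by (simp only: sum_transversal_pairs_overlaps mult.assoc)
  also have "\<dots> \<le> 7/6 * copy_prob ^ 2 * real (card transversals) ^ 2 * (2 * (real m * ?y) ^ 2)"
  proof (intro mult_left_mono)
    have "real m * ?y \<le> 1/2"
      using small my by simp
    then show "(\<Sum>J | J \<subseteq> {1..m} \<and> 2 \<le> card J. ?y ^ card J) \<le> 2 * (real m * ?y) ^ 2"
      using sum_power_card_subsets_le[of "{1..m}" ?y] part_size_pos p_pos by simp
  qed simp
  also have "\<dots> = 7/3 * (real (card transversals) * copy_prob) ^ 2 * (real m * ?y) ^ 2"
    by (simp add: power_mult_distrib)
  finally show ?thesis
    unfolding expectation_copy_count my .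
qed

lemma prob_copy_count_le:
  assumes bal: "balanced EH {1..m}" and mp: "real m ^ 2 * p \<le> 1/7"
    and small: "real m ^ 2 * p powr (- avg_degree EH {1..m} / 2) / real n \<le> 1/2"
    and "\<beta> < 1"
  shows "measure_pmf.prob (Gnp n p)
           {G. copy_count G \<le> \<beta> * measure_pmf.expectation (Gnp n p) copy_count}
         \<le> 7/3 * (real m ^ 2 * p powr (- avg_degree EH {1..m} / 2) / real n) ^ 2 / (1 - \<beta>) ^ 2"
proof -
  let ?E = "measure_pmf.expectation (Gnp n p) copy_count"
  have "0 < ?E"
    using part_size_pos copy_prob_pos by (simp add: expectation_copy_count card_transversals)
  then have "measure_pmf.prob (Gnp n p) {G. copy_count G \<le> \<beta> * ?E}
      \<le> measure_pmf.variance (Gnp n p) copy_count / ((1 - \<beta>) * ?E) ^ 2"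
    using measure_pmf.prob_le_fraction_of_expectation[where X = copy_count] assms(4) by simp
  also have "\<dots> \<le> 7/3 * ?E ^ 2 * (real m ^ 2 * p powr (- avg_degree EH {1..m} / 2) / real n) ^ 2
                    / ((1 - \<beta>) * ?E) ^ 2"
    by (intro divide_right_mono variance_copy_count_le[OF bal mp small]) simp
  also have "\<dots> = 7/3 * (real m ^ 2 * p powr (- avg_degree EH {1..m} / 2) / real n) ^ 2 / (1 - \<beta>) ^ 2"
    using \<open>0 < ?E\<close> by (simp add: power_mult_distrib)
  finally show ?thesis .
qed

end

theorem lemmaC1:
  fixes \<epsilon> p \<alpha> \<beta> :: real and n m :: nat and EH :: "nat set set"
  assumes eps: "0 < \<epsilon>" "\<epsilon> < 1/7"
    and p: "0 < p" "p < 1"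
    and H_graph: "EH \<subseteq> pairs {1..m}"
    and H_bal: "balanced EH {1..m}"
    and H_avg: "\<alpha> = avg_degree EH {1..m}"
    and alpha: "2 < \<alpha>" "\<alpha> < 3"
    and mdvd: "m dvd n"
    and m1: "real m \<le> sqrt (\<epsilon> / p)"
    and m2: "real m \<le> 2 powr (-1/4) * p powr (\<alpha> / 4) * sqrt (\<epsilon> * real n)"
    and beta: "0 \<le> \<beta>" "\<beta> < 1"
  shows "measure_pmf.prob (Gnp n p)
           {G. real (XH n m EH G) \<le> \<beta> * measure_pmf.expectation (Gnp n p) (\<lambda>G. real (XH n m EH G))}
         \<le> 4 * \<epsilon> / (1 - \<beta>)^2"
proof -
  have "0 < m"
    using H_avg alpha by (cases m) (auto simp: avg_degree_def)
  moreover have "0 < n"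
    using m2 \<open>0 < m\<close> by (cases "n = 0") simp_all
  ultimately interpret partite_copies n m EH p
    using mdvd p H_graph by unfold_locales auto
  define x where "x = real m ^ 2 * p powr (- \<alpha> / 2) / real n"
  have "real m ^ 2 * p \<le> \<epsilon>"
    using sqrt_ge_absD[of "real m" "\<epsilon> / p"] m1 p by (simp add: field_simps)
  then have mp: "real m ^ 2 * p \<le> 1/7"
    using eps by linarith
  have "2 * x ^ 2 \<le> \<epsilon> ^ 2"
    unfolding x_def using eps p \<open>0 < n\<close> m2 by (intro squared_overlap_ratio_le) auto
  moreover have "\<epsilon> ^ 2 \<le> \<epsilon> / 7"
    using eps mult_left_mono[of \<epsilon> "1/7" \<epsilon>] by (simp add: power2_eq_square)
  ultimately have x: "x * x \<le> \<epsilon> / 14"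
    by (simp add: power2_eq_square)
  then have "x \<le> 1/2"
    using eps power2_le_imp_le[of x "1/2"] by (simp add: power2_eq_square)
  then have "measure_pmf.prob (Gnp n p)
      {G. copy_count G \<le> \<beta> * measure_pmf.expectation (Gnp n p) copy_count} \<le> 7/3 * x ^ 2 / (1 - \<beta>) ^ 2"
    unfolding x_def H_avg using prob_copy_count_le[OF H_bal mp] beta by simp
  also have "\<dots> \<le> 4 * \<epsilon> / (1 - \<beta>) ^ 2"
    using x eps by (intro divide_right_mono) (simp_all add: power2_eq_square)
  finally show ?thesis
    by (simp add: XH_eq_copy_count)
qed

end
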